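(* Let $(R,\mathfrak m)$ be a $d$-dimensional Noetherian local ring of prime characteristic $p>0$, and let $I_\bullet=\{I_q\}$ be a sequence of ideals indexed by powers $q$ of $p$ with $\mathfrak m^{cq}\subseteq I_q$ for some positive integer $c$ and all $q$. Let $x\in R$ be a nonzerodivisor and $L_\bullet=\{L_q\}$ a sequence of ideals with $I_q\subseteq L_q\subseteq(I_q:x)$ for all $q$. Then there is a constant $\gamma>0$ with \[\ell_R(R/I_q)-\ell_R(R/L_q)\le\gamma\cdot q^{d-1}\] for all powers $q$ of $p$.
   Context: $q$ ranges over the powers $p^e$, $e\ge0$. *)

theory Defs
  imports Complex_Main "HOL-Computational_Algebra.Primes"
begin

definition is_ideal :: "'a::comm_ring_1 set \<Rightarrow> bool" where
  "is_ideal I \<longleftrightarrow> 0 \<in> I \<and> (\<forall>a\<in>I. \<forall>b\<in>I. a + b \<in> I) \<and> (\<forall>a\<in>I. \<forall>r. r * a \<in> I)"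

definition ideal_gen :: "'a::comm_ring_1 set \<Rightarrow> 'a set" where
  "ideal_gen S = \<Inter>{J. is_ideal J \<and> S \<subseteq> J}"

definition prime_ideal :: "'a::comm_ring_1 set \<Rightarrow> bool" where
  "prime_ideal P \<longleftrightarrow> is_ideal P \<and> P \<noteq> UNIV \<and> (\<forall>a b. a * b \<in> P \<longrightarrow> a \<in> P \<or> b \<in> P)"

definition maximal_ideal :: "'a::comm_ring_1 set \<Rightarrow> bool" where
  "maximal_ideal M \<longleftrightarrow> is_ideal M \<and> M \<noteq> UNIV \<and>
     (\<forall>J. is_ideal J \<and> M \<subseteq> J \<longrightarrow> J = M \<or> J = UNIV)"

definition noetherian_ring :: "'a::comm_ring_1 itself \<Rightarrow> bool" where
  "noetherian_ring _ \<longleftrightarrow> (\<forall>I::'a set. is_ideal I \<longrightarrow> (\<exists>S. finite S \<and> I = ideal_gen S))"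

definition local_ring :: "'a::comm_ring_1 set \<Rightarrow> bool" where
  "local_ring m \<longleftrightarrow> maximal_ideal m \<and> (\<forall>M. maximal_ideal M \<longrightarrow> M = m)"

definition prime_chain :: "(nat \<Rightarrow> 'a::comm_ring_1 set) \<Rightarrow> nat \<Rightarrow> bool" where
  "prime_chain P n \<longleftrightarrow> (\<forall>i\<le>n. prime_ideal (P i)) \<and> (\<forall>i<n. P i \<subset> P (Suc i))"

definition krull_dim :: "'a::comm_ring_1 itself \<Rightarrow> nat \<Rightarrow> bool" where
  "krull_dim _ d \<longleftrightarrow> (\<exists>P::nat \<Rightarrow> 'a set. prime_chain P d) \<and>
                     \<not> (\<exists>P::nat \<Rightarrow> 'a set. prime_chain P (Suc d))"

definition ideal_pow :: "'a::comm_ring_1 set \<Rightarrow> nat \<Rightarrow> 'a set" where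
  "ideal_pow m n = ideal_gen {prod_list xs | xs. length xs = n \<and> set xs \<subseteq> m}"

definition colon_ideal :: "'a::comm_ring_1 set \<Rightarrow> 'a \<Rightarrow> 'a set" where
  "colon_ideal I x = {r. r * x \<in> I}"

text \<open>Length of the R-module R/I: supremum of lengths of strict chains of submodules
of R/I, i.e. of ideals I = J_0 < J_1 < ... < J_n = R. (Meaningful when finite.)\<close>
definition quot_length :: "'a::comm_ring_1 set \<Rightarrow> nat" where
  "quot_length I = Sup {n. \<exists>J::nat \<Rightarrow> 'a set. J 0 = I \<and> J n = UNIV \<and>
      (\<forall>i\<le>n. is_ideal (J i)) \<and> (\<forall>i<n. J i \<subset> J (Suc i))}"

end

theory Submission
  imports Defs "HOL-Library.Set_Algebras"
begin

text \<open>A nonzerodivisor \<open>x\<close> lies in no minimal prime, so \<open>dim R/(x) \<le> d - 1\<close> and prime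
  avoidance yields \<open>y\<^sub>1, \<dots>, y\<^sub>d\<^sub>-\<^sub>1 \<in> m\<close> with \<open>m\<^sup>t \<subseteq> (x, y\<^sub>1, \<dots>, y\<^sub>d\<^sub>-\<^sub>1)\<close>.
  Put \<open>N = c q\<close>. Multiplication by \<open>x\<close> embeds \<open>R/(I\<^sub>q : x)\<close> into \<open>R/I\<^sub>q\<close> with cokernel
  \<open>R/(I\<^sub>q + (x))\<close>, and \<open>L\<^sub>q \<subseteq> (I\<^sub>q : x)\<close>, so \<open>\<ell>(R/I\<^sub>q) - \<ell>(R/L\<^sub>q) \<le> \<ell>(R/(I\<^sub>q + (x)))\<close>.
  Since \<open>y\<^sub>i\<^sup>N \<in> m\<^sup>N \<subseteq> I\<^sub>q\<close>, the latter is at most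
  \<open>\<ell>(R/(x, y\<^sub>1\<^sup>N, \<dots>, y\<^sub>d\<^sub>-\<^sub>1\<^sup>N)) \<le> N\<^sup>d\<^sup>-\<^sup>1 \<ell>(R/m\<^sup>t) = c\<^sup>d\<^sup>-\<^sup>1 \<ell>(R/m\<^sup>t) q\<^sup>d\<^sup>-\<^sup>1\<close>.
  If \<open>d = 0\<close> then \<open>x\<close> is a unit and \<open>L\<^sub>q = I\<^sub>q\<close>.\<close>

section \<open>Ideals\<close>

definition principal_ideal :: "'a::comm_ring_1 \<Rightarrow> 'a set" where
  "principal_ideal b = range (\<lambda>r. r * b)"

abbreviation sum_principals :: "'a::comm_ring_1 list \<Rightarrow> 'a set" where
  "sum_principals ys \<equiv> sum_list (map principal_ideal ys)"

lemma ideal_zero_mem: "is_ideal I \<Longrightarrow> 0 \<in> I"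
  by (simp add: is_ideal_def)

lemma ideal_add_mem: "is_ideal I \<Longrightarrow> a \<in> I \<Longrightarrow> b \<in> I \<Longrightarrow> a + b \<in> I"
  by (simp add: is_ideal_def)

lemma ideal_mult_left: "is_ideal I \<Longrightarrow> a \<in> I \<Longrightarrow> r * a \<in> I"
  by (simp add: is_ideal_def)

lemma ideal_mult_right: "is_ideal I \<Longrightarrow> a \<in> I \<Longrightarrow> a * r \<in> I"
  by (metis ideal_mult_left mult.commute)

lemma ideal_diff_mem: "is_ideal I \<Longrightarrow> a \<in> I \<Longrightarrow> b \<in> I \<Longrightarrow> a - b \<in> I"
  using ideal_add_mem[of I a "(-1) * b"] ideal_mult_left[of I b "-1"] by simp

lemma ideal_eq_UNIV_if_one_mem: "is_ideal I \<Longrightarrow> 1 \<in> I \<Longrightarrow> I = UNIV"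
  using ideal_mult_left[of I 1] by auto

lemma is_ideal_UNIV: "is_ideal UNIV"
  by (simp add: is_ideal_def)

lemma is_ideal_zero: "is_ideal {0::'a::comm_ring_1}"
  by (simp add: is_ideal_def)

lemma is_ideal_Int: "is_ideal A \<Longrightarrow> is_ideal B \<Longrightarrow> is_ideal (A \<inter> B)"
  by (simp add: is_ideal_def)

lemma is_ideal_plus:
  assumes "is_ideal A" "is_ideal B"
  shows "is_ideal (A + B)"
  unfolding is_ideal_def
proof (intro conjI ballI allI)
  show "0 \<in> A + B"
    using set_plus_intro[OF ideal_zero_mem ideal_zero_mem] assms by fastforce
next
  fix u v assume "u \<in> A + B" "v \<in> A + B"
  then obtain a b a' b' where "a \<in> A" "b \<in> B" "a' \<in> A" "b' \<in> B" "u = a + b" "v = a' + b'"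
    by (auto elim!: set_plus_elim)
  moreover from this have "u + v = (a + a') + (b + b')"
    by (simp add: algebra_simps)
  ultimately show "u + v \<in> A + B"
    using assms by (metis ideal_add_mem set_plus_intro)
next
  fix u r assume "u \<in> A + B"
  then obtain a b where "a \<in> A" "b \<in> B" "u = a + b"
    by (auto elim!: set_plus_elim)
  moreover from this have "r * u = r * a + r * b"
    by (simp add: algebra_simps)
  ultimately show "r * u \<in> A + B"
    using assms by (metis ideal_mult_left set_plus_intro)
qed

lemma is_ideal_principal_ideal: "is_ideal (principal_ideal b)"
  unfolding is_ideal_def principal_ideal_def
proof (intro conjI ballI allI)
  show "0 \<in> range (\<lambda>r. r * b)"
    using rangeI[of "\<lambda>r. r * b" 0] by simp
next
  fix u v assume "u \<in> range (\<lambda>r. r * b)" "v \<in> range (\<lambda>r. r * b)"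
  then obtain r s where "u + v = (r + s) * b"
    by (auto simp: distrib_right)
  then show "u + v \<in> range (\<lambda>r. r * b)" by blast
next
  fix u t assume "u \<in> range (\<lambda>r. r * b)"
  then obtain r where "t * u = (t * r) * b"
    by (auto simp: mult.assoc)
  then show "t * u \<in> range (\<lambda>r. r * b)" by blast
qed

lemma principal_ideal_self: "b \<in> principal_ideal b"
  unfolding principal_ideal_def using rangeI[of "\<lambda>r. r * b" 1] by simp

lemma principal_ideal_subset: "is_ideal I \<Longrightarrow> b \<in> I \<Longrightarrow> principal_ideal b \<subseteq> I"
  unfolding principal_ideal_def using ideal_mult_left by blast

lemma principal_ideal_one: "principal_ideal 1 = UNIV"
  unfolding principal_ideal_def by auto

lemma principal_ideal_power_Suc_subset: "principal_ideal (y ^ Suc n) \<subseteq> principal_ideal (y ^ n)"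
  unfolding principal_ideal_def
proof (rule image_subsetI)
  fix r
  show "r * y ^ Suc n \<in> range (\<lambda>r. r * y ^ n)"
    using rangeI[of "\<lambda>r. r * y ^ n" "r * y"] by (simp add: ac_simps)
qed

lemma is_ideal_colon_ideal: "is_ideal I \<Longrightarrow> is_ideal (colon_ideal I x)"
  unfolding is_ideal_def colon_ideal_def by (auto simp: distrib_right mult.assoc)

lemma subset_colon_ideal: "is_ideal I \<Longrightarrow> I \<subseteq> colon_ideal I x"
  unfolding colon_ideal_def using ideal_mult_right by blast

lemma colon_ideal_mono: "A \<subseteq> B \<Longrightarrow> colon_ideal A b \<subseteq> colon_ideal B b"
  unfolding colon_ideal_def by auto

lemma is_ideal_ideal_gen: "is_ideal (ideal_gen S)"
  unfolding ideal_gen_def is_ideal_def by auto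

lemma subset_ideal_gen: "S \<subseteq> ideal_gen S"
  unfolding ideal_gen_def by auto

lemma ideal_gen_least: "is_ideal J \<Longrightarrow> S \<subseteq> J \<Longrightarrow> ideal_gen S \<subseteq> J"
  unfolding ideal_gen_def by auto

lemma ideal_plus_upper1: "is_ideal B \<Longrightarrow> A \<subseteq> A + B"
  unfolding set_plus_def using ideal_zero_mem by force

lemma ideal_plus_upper2: "is_ideal A \<Longrightarrow> B \<subseteq> A + B"
  unfolding set_plus_def using ideal_zero_mem by force

lemma ideal_plus_least: "is_ideal C \<Longrightarrow> A \<subseteq> C \<Longrightarrow> B \<subseteq> C \<Longrightarrow> A + B \<subseteq> C"
  unfolding set_plus_def using ideal_add_mem by fastforce

lemma is_ideal_sum_principals: "is_ideal (sum_principals ys)"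
  by (induction ys) (auto simp: is_ideal_zero is_ideal_plus is_ideal_principal_ideal)

lemma principal_ideal_subset_sum_principals: "y \<in> set ys \<Longrightarrow> principal_ideal y \<subseteq> sum_principals ys"
proof (induction ys)
  case (Cons a ys)
  then show ?case
    using ideal_plus_upper1[OF is_ideal_sum_principals] ideal_plus_upper2[OF is_ideal_principal_ideal]
    by (metis set_ConsD list.simps(9) sum_list.Cons subset_trans)
qed simp

lemma sum_principals_subset: "is_ideal I \<Longrightarrow> set ys \<subseteq> I \<Longrightarrow> sum_principals ys \<subseteq> I"
  by (induction ys) (simp_all add: ideal_zero_mem ideal_plus_least principal_ideal_subset)

lemma ideal_modular_eq:
  assumes "is_ideal X" "is_ideal Y" "is_ideal K" "X \<subseteq> Y" "X \<inter> K = Y \<inter> K" "X + K = Y + K"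
  shows "X = Y"
proof
  show "Y \<subseteq> X"
  proof
    fix z assume z: "z \<in> Y"
    then have "z \<in> X + K"
      using assms(3,6) ideal_plus_upper1 by blast
    then obtain a k where a: "a \<in> X" "k \<in> K" "z = a + k"
      unfolding set_plus_def by blast
    then have "k \<in> Y \<inter> K"
      using ideal_diff_mem[OF assms(2) z, of a] assms(4) by auto
    then have "k \<in> X"
      using assms(5) by blast
    then show "z \<in> X"
      using a ideal_add_mem[OF assms(1)] by simp
  qed
qed (use assms in simp)

section \<open>Lengths of quotients\<close>

abbreviation strict_steps :: "(nat \<Rightarrow> 'a set) \<Rightarrow> nat \<Rightarrow> nat set" where
  "strict_steps J n \<equiv> {i. i < n \<and> J i \<subset> J (Suc i)}"

text \<open>\<open>length_le A B k\<close> says that the module \<open>B/A\<close> has length at most \<open>k\<close>. Chains are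
  only weakly increasing and their strict steps are counted, so that intersecting or adding a fixed
  ideal to a chain again gives a chain.\<close>

definition length_le :: "'a::comm_ring_1 set \<Rightarrow> 'a set \<Rightarrow> nat \<Rightarrow> bool" where
  "length_le A B k \<longleftrightarrow> (\<forall>J n. (\<forall>i\<le>n. is_ideal (J i) \<and> A \<subseteq> J i \<and> J i \<subseteq> B) \<longrightarrow>
      (\<forall>i<n. J i \<subseteq> J (Suc i)) \<longrightarrow> card (strict_steps J n) \<le> k)"

lemma length_leD:
  assumes "length_le A B k" "\<And>i. i \<le> n \<Longrightarrow> is_ideal (J i)" "\<And>i. i \<le> n \<Longrightarrow> A \<subseteq> J i"
    "\<And>i. i \<le> n \<Longrightarrow> J i \<subseteq> B" "\<And>i. i < n \<Longrightarrow> J i \<subseteq> J (Suc i)"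
  shows "card (strict_steps J n) \<le> k"
  using assms unfolding length_le_def by blast

lemma length_le_mono:
  assumes "length_le A B k" "A \<subseteq> A'" "B' \<subseteq> B" "k \<le> k'"
  shows "length_le A' B' k'"
  using assms unfolding length_le_def by (meson order_trans)

lemma length_le_refl: "length_le A A 0"
  unfolding length_le_def
proof (intro allI impI)
  fix J :: "nat \<Rightarrow> 'a set" and n
  assume "\<forall>i\<le>n. is_ideal (J i) \<and> A \<subseteq> J i \<and> J i \<subseteq> A"
  then have "J i = J (Suc i)" if "i < n" for i
    using that by (metis Suc_leI less_imp_le_nat subset_antisym)
  then have "strict_steps J n = {}"
    by auto
  then show "card (strict_steps J n) \<le> 0" by simp
qed

lemma weak_chain_mono:
  assumes "\<forall>i<n. J i \<subseteq> J (Suc i)" "i \<le> j" "j \<le> n"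
  shows "J i \<subseteq> J j"
  using assms(2,3)
proof (induction j rule: dec_induct)
  case (step k)
  then show ?case using assms(1) by (meson Suc_leD Suc_le_lessD order_trans)
qed simp

lemma strict_step_Int_or_plus:
  assumes "is_ideal X" "is_ideal Y" "is_ideal K" "X \<subset> Y"
  shows "X \<inter> K \<subset> Y \<inter> K \<or> X + K \<subset> Y + K"
proof -
  have "X \<inter> K \<subseteq> Y \<inter> K" "X + K \<subseteq> Y + K"
    using assms(4) set_plus_mono2[of X Y K K] by auto
  moreover have "X \<inter> K \<noteq> Y \<inter> K \<or> X + K \<noteq> Y + K"
    using ideal_modular_eq[OF assms(1-3)] assms(4) by blast
  ultimately show ?thesis by blast
qed

lemma length_le_add:
  assumes "is_ideal K" "is_ideal B" "A \<subseteq> K" "K \<subseteq> B" "length_le A K a" "length_le K B b"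
  shows "length_le A B (a + b)"
  unfolding length_le_def
proof (intro allI impI)
  fix J :: "nat \<Rightarrow> 'a set" and n
  assume J: "\<forall>i\<le>n. is_ideal (J i) \<and> A \<subseteq> J i \<and> J i \<subseteq> B" and mono: "\<forall>i<n. J i \<subseteq> J (Suc i)"
  have "card (strict_steps (\<lambda>i. J i \<inter> K) n) \<le> a"
  proof (rule length_leD[OF assms(5)])
    fix i assume "i \<le> n"
    then show "is_ideal (J i \<inter> K)" "A \<subseteq> J i \<inter> K" "J i \<inter> K \<subseteq> K"
      using J assms(1,3) is_ideal_Int by blast+
  next
    fix i assume "i < n"
    then show "J i \<inter> K \<subseteq> J (Suc i) \<inter> K"
      using mono by blast
  qed
  moreover have "card (strict_steps (\<lambda>i. J i + K) n) \<le> b"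
  proof (rule length_leD[OF assms(6)])
    fix i assume "i \<le> n"
    then have Ji: "is_ideal (J i)" "J i \<subseteq> B"
      using J by blast+
    show "is_ideal (J i + K)"
      by (rule is_ideal_plus[OF Ji(1) assms(1)])
    show "K \<subseteq> J i + K"
      by (rule ideal_plus_upper2[OF Ji(1)])
    show "J i + K \<subseteq> B"
      by (rule ideal_plus_least[OF assms(2) Ji(2) assms(4)])
  next
    fix i assume "i < n"
    then show "J i + K \<subseteq> J (Suc i) + K"
      using mono by (intro set_plus_mono2) auto
  qed
  moreover have "strict_steps J n \<subseteq> strict_steps (\<lambda>i. J i \<inter> K) n \<union> strict_steps (\<lambda>i. J i + K) n"
  proof
    fix i assume "i \<in> strict_steps J n"
    then show "i \<in> strict_steps (\<lambda>i. J i \<inter> K) n \<union> strict_steps (\<lambda>i. J i + K) n"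
      using J strict_step_Int_or_plus[OF _ _ assms(1), of "J i" "J (Suc i)"] by auto
  qed
  then have "card (strict_steps J n)
      \<le> card (strict_steps (\<lambda>i. J i \<inter> K) n \<union> strict_steps (\<lambda>i. J i + K) n)"
    by (intro card_mono) auto
  ultimately show "card (strict_steps J n) \<le> a + b"
    using card_Un_le order_trans by fastforce
qed

lemma colon_ideal_strict_mono:
  assumes "is_ideal X" "is_ideal Y" "A \<subseteq> X" "X \<subset> Y" "Y \<subseteq> A + principal_ideal b"
  shows "colon_ideal X b \<subset> colon_ideal Y b"
proof
  show "colon_ideal X b \<subseteq> colon_ideal Y b"
    using assms(4) colon_ideal_mono by blast
  show "colon_ideal X b \<noteq> colon_ideal Y b"
  proof
    assume eq: "colon_ideal X b = colon_ideal Y b"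
    obtain z where z: "z \<in> Y" "z \<notin> X"
      using assms(4) by blast
    then obtain a r where ar: "a \<in> A" "z = a + r * b"
      using assms(5) unfolding set_plus_def principal_ideal_def by blast
    then have "r * b \<in> Y"
      using ideal_diff_mem[OF assms(2) z(1), of a] assms(3,4) by auto
    then have "r * b \<in> X"
      using eq unfolding colon_ideal_def by blast
    then show False
      using ar assms(3) z(2) ideal_add_mem[OF assms(1)] by blast
  qed
qed

lemma length_le_plus_principal:
  assumes "length_le (colon_ideal A b) UNIV k"
  shows "length_le A (A + principal_ideal b) k"
  unfolding length_le_def
proof (intro allI impI)
  fix J :: "nat \<Rightarrow> 'a set" and n
  assume J: "\<forall>i\<le>n. is_ideal (J i) \<and> A \<subseteq> J i \<and> J i \<subseteq> A + principal_ideal b"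
    and mono: "\<forall>i<n. J i \<subseteq> J (Suc i)"
  let ?C = "\<lambda>i. colon_ideal (J i) b"
  have "card (strict_steps ?C n) \<le> k"
  proof (rule length_leD[OF assms])
    fix i assume "i \<le> n"
    then show "is_ideal (?C i)" "colon_ideal A b \<subseteq> ?C i"
      using J is_ideal_colon_ideal colon_ideal_mono by blast+
  next
    fix i assume "i < n"
    then show "?C i \<subseteq> ?C (Suc i)"
      using mono colon_ideal_mono by blast
  qed simp
  moreover have "strict_steps J n \<subseteq> strict_steps ?C n"
  proof
    fix i assume "i \<in> strict_steps J n"
    then show "i \<in> strict_steps ?C n"
      using J colon_ideal_strict_mono[of "J i" "J (Suc i)" A b] by auto
  qed
  then have "card (strict_steps J n) \<le> card (strict_steps ?C n)"
    by (intro card_mono) auto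
  ultimately show "card (strict_steps J n) \<le> k" by linarith
qed

lemma length_le_maximal_ideal:
  assumes "maximal_ideal m" "m \<subseteq> K"
  shows "length_le K UNIV 1"
  unfolding length_le_def
proof (intro allI impI)
  fix J :: "nat \<Rightarrow> 'a set" and n
  assume J: "\<forall>i\<le>n. is_ideal (J i) \<and> K \<subseteq> J i \<and> J i \<subseteq> UNIV" and mono: "\<forall>i<n. J i \<subseteq> J (Suc i)"
  have m_or_UNIV: "J i = m \<or> J i = UNIV" if "i \<le> n" for i
    using J assms that unfolding maximal_ideal_def by blast
  have top: "J (Suc i) = UNIV" if "i \<in> strict_steps J n" for i
    using that m_or_UNIV[of i] m_or_UNIV[of "Suc i"] by auto
  have no_later: "\<not> Suc i \<le> j" if "i \<in> strict_steps J n" "j \<in> strict_steps J n" for i j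
    using that top[of i] weak_chain_mono[OF mono, of "Suc i" j] by auto
  have "i = j" if "i \<in> strict_steps J n" "j \<in> strict_steps J n" for i j
    using no_later[OF that] no_later[OF that(2,1)] by linarith
  then show "card (strict_steps J n) \<le> 1"
    using card_le_Suc0_iff_eq[of "strict_steps J n"] by auto
qed

definition ideal_chain_lengths :: "'a::comm_ring_1 set \<Rightarrow> nat set" where
  "ideal_chain_lengths I = {n. \<exists>J::nat \<Rightarrow> 'a set. J 0 = I \<and> J n = UNIV \<and>
      (\<forall>i\<le>n. is_ideal (J i)) \<and> (\<forall>i<n. J i \<subset> J (Suc i))}"

lemma quot_length_eq_Sup: "quot_length I = Sup (ideal_chain_lengths I)"
  unfolding quot_length_def ideal_chain_lengths_def by simp

lemma ideal_chain_lengths_le: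
  assumes "length_le I UNIV k" "n \<in> ideal_chain_lengths I"
  shows "n \<le> k"
proof -
  obtain J where J: "J 0 = I" "\<forall>i\<le>n. is_ideal (J i)" "\<forall>i<n. J i \<subset> J (Suc i)"
    using assms(2) unfolding ideal_chain_lengths_def by blast
  then have mono: "\<forall>i<n. J i \<subseteq> J (Suc i)"
    by auto
  have "card (strict_steps J n) \<le> k"
    using J weak_chain_mono[OF mono, of 0] by (intro length_leD[OF assms(1)]) auto
  moreover have "strict_steps J n = {..<n}"
    using J(3) by auto
  ultimately show ?thesis by simp
qed

lemma quot_length_le:
  assumes "length_le I UNIV k"
  shows "quot_length I \<le> k"
proof (cases "ideal_chain_lengths I = {}")
  case False
  then show ?thesis
    unfolding quot_length_eq_Sup by (rule cSup_least) (use ideal_chain_lengths_le[OF assms] in auto)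
qed (simp add: quot_length_eq_Sup)

lemma exists_strict_subchain:
  assumes "\<forall>i<n. J i \<subseteq> J (Suc i)"
  shows "\<exists>K. K 0 = J 0 \<and> K (card (strict_steps J n)) = J n \<and>
    (\<forall>i\<le>card (strict_steps J n). \<exists>j\<le>n. K i = J j) \<and>
    (\<forall>i<card (strict_steps J n). K i \<subset> K (Suc i))"
  using assms
proof (induction n)
  case 0
  show ?case by (rule exI[of _ J]) auto
next
  case (Suc n)
  obtain K where K: "K 0 = J 0" "K (card (strict_steps J n)) = J n"
    "\<forall>i\<le>card (strict_steps J n). \<exists>j\<le>n. K i = J j"
    "\<forall>i<card (strict_steps J n). K i \<subset> K (Suc i)"
    using Suc by auto
  show ?case
  proof (cases "J n \<subset> J (Suc n)")
    case True
    have "strict_steps J (Suc n) = insert n (strict_steps J n)"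
      using True by auto
    then have card: "card (strict_steps J (Suc n)) = Suc (card (strict_steps J n))"
      by simp
    show ?thesis
      unfolding card
      by (rule exI[of _ "K(Suc (card (strict_steps J n)) := J (Suc n))"])
        (use K True in \<open>auto simp: less_Suc_eq le_Suc_eq\<close>)
  next
    case False
    then have "strict_steps J (Suc n) = strict_steps J n" "J (Suc n) = J n"
      using Suc.prems by (auto simp: less_Suc_eq)
    then show ?thesis
      by (intro exI[of _ K]) (use K in \<open>auto simp: le_Suc_eq\<close>)
  qed
qed
lemma card_strict_steps_le_quot_length:
  assumes "length_le I UNIV k" "J 0 = I" "J n = UNIV" "\<forall>i\<le>n. is_ideal (J i)"
    "\<forall>i<n. J i \<subseteq> J (Suc i)"
  shows "card (strict_steps J n) \<le> quot_length I"
proof -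
  obtain K where K: "K 0 = J 0" "K (card (strict_steps J n)) = J n"
    "\<forall>i\<le>card (strict_steps J n). \<exists>j\<le>n. K i = J j"
    "\<forall>i<card (strict_steps J n). K i \<subset> K (Suc i)"
    using exists_strict_subchain[OF assms(5)] by blast
  moreover have "\<forall>i\<le>card (strict_steps J n). is_ideal (K i)"
    using K(3) assms(4) by fastforce
  ultimately have "card (strict_steps J n) \<in> ideal_chain_lengths I"
    unfolding ideal_chain_lengths_def using assms(2,3) by auto
  then show ?thesis
    unfolding quot_length_eq_Sup
    by (rule cSup_upper) (use ideal_chain_lengths_le[OF assms(1)] in \<open>auto simp: bdd_above_def\<close>)
qed

lemma length_le_quot_length:
  assumes "is_ideal I" "length_le I UNIV k"
  shows "length_le I UNIV (quot_length I)"
  unfolding length_le_def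
proof (intro allI impI)
  fix J :: "nat \<Rightarrow> 'a set" and n
  assume J: "\<forall>i\<le>n. is_ideal (J i) \<and> I \<subseteq> J i \<and> J i \<subseteq> UNIV" and mono: "\<forall>i<n. J i \<subseteq> J (Suc i)"
  define J' where "J' i = (if i = 0 then I else if i \<le> Suc n then J (i - 1) else UNIV)" for i
  have "J' i \<subseteq> J' (Suc i)" if "i < Suc (Suc n)" for i
  proof (cases i)
    case 0
    then show ?thesis using J by (simp add: J'_def)
  next
    case (Suc j)
    then show ?thesis using mono that by (cases "j < n") (auto simp: J'_def)
  qed
  moreover have "\<forall>i\<le>Suc (Suc n). is_ideal (J' i)"
    using J assms(1) by (auto simp: J'_def is_ideal_UNIV)
  ultimately have "card (strict_steps J' (Suc (Suc n))) \<le> quot_length I"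
    using assms(2) by (intro card_strict_steps_le_quot_length) (simp_all add: J'_def)
  moreover have "Suc ` strict_steps J n \<subseteq> strict_steps J' (Suc (Suc n))"
    by (auto simp: J'_def)
  then have "card (strict_steps J n) \<le> card (strict_steps J' (Suc (Suc n)))"
    using card_mono[of _ "Suc ` strict_steps J n"] by (simp add: card_image)
  ultimately show "card (strict_steps J n) \<le> quot_length I"
    by linarith
qed

lemma quot_length_antimono:
  assumes "is_ideal A" "A \<subseteq> B" "length_le A UNIV k"
  shows "quot_length B \<le> quot_length A"
  using quot_length_le length_le_mono[OF length_le_quot_length[OF assms(1,3)] assms(2)] by blast
lemma length_le_plus_principals:
  assumes "maximal_ideal m" "is_ideal A" "\<forall>s\<in>set ss. \<forall>r\<in>m. r * s \<in> A"
  shows "length_le A (A + sum_principals ss) (length ss)"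
  using assms(2,3)
proof (induction ss arbitrary: A)
  case Nil
  then show ?case by (simp add: length_le_refl)
next
  case (Cons s ss)
  let ?K = "A + principal_ideal s"
  have K: "is_ideal ?K" "A \<subseteq> ?K"
    using Cons.prems(1) is_ideal_plus is_ideal_principal_ideal ideal_plus_upper1 by blast+
  have "m \<subseteq> colon_ideal A s"
    using Cons.prems(2) unfolding colon_ideal_def by auto
  then have "length_le A ?K 1"
    using length_le_plus_principal length_le_maximal_ideal[OF assms(1)] by blast
  moreover have "length_le ?K (?K + sum_principals ss) (length ss)"
    using Cons.IH[OF K(1)] Cons.prems(2) K(2) by auto
  ultimately have "length_le A (?K + sum_principals ss) (1 + length ss)"
    by (rule length_le_add[OF K(1) is_ideal_plus[OF K(1) is_ideal_sum_principals] K(2)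
          ideal_plus_upper1[OF is_ideal_sum_principals]])
  then show ?case
    by (simp add: add.assoc)
qed

lemma plus_principal_subset_colon_power:
  assumes "is_ideal J"
  shows "J + principal_ideal y \<subseteq> colon_ideal (J + principal_ideal (y ^ Suc n)) (y ^ n)"
proof
  fix z assume "z \<in> J + principal_ideal y"
  then obtain j r where jr: "j \<in> J" "z = j + r * y"
    unfolding set_plus_def principal_ideal_def by blast
  then have "z * y ^ n = j * y ^ n + r * y ^ Suc n"
    by (simp add: algebra_simps)
  moreover have "r * y ^ Suc n \<in> principal_ideal (y ^ Suc n)"
    unfolding principal_ideal_def by blast
  ultimately have "z * y ^ n \<in> J + principal_ideal (y ^ Suc n)"
    using ideal_mult_right[OF assms jr(1)] set_plus_intro by metis
  then show "z \<in> colon_ideal (J + principal_ideal (y ^ Suc n)) (y ^ n)"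
    unfolding colon_ideal_def by simp
qed

text \<open>Multiplication by \<open>y\<^sup>n\<close> embeds \<open>R/(J + (y))\<close> into \<open>(J + (y\<^sup>n))/(J + (y\<^sup>n\<^sup>+\<^sup>1))\<close>.\<close>

lemma length_le_power_principal:
  assumes J: "is_ideal J" and len: "length_le (J + principal_ideal y) UNIV k"
  shows "length_le (J + principal_ideal (y ^ n)) UNIV (n * k)"
proof (induction n)
  case 0
  have "J + principal_ideal (y ^ 0) = UNIV"
    using ideal_plus_upper2[OF J, of UNIV] by (auto simp: principal_ideal_one)
  then show ?case by (simp add: length_le_refl)
next
  case (Suc n)
  let ?A = "J + principal_ideal (y ^ Suc n)" and ?K = "J + principal_ideal (y ^ n)"
  have ideals: "is_ideal ?A" "is_ideal ?K"
    using J is_ideal_plus is_ideal_principal_ideal by blast+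
  have "?A \<subseteq> ?K"
    by (rule set_plus_mono2[OF order_refl principal_ideal_power_Suc_subset])
  have eq: "?A + principal_ideal (y ^ n) = ?K"
  proof
    show "?A + principal_ideal (y ^ n) \<subseteq> ?K"
      by (rule ideal_plus_least[OF ideals(2) \<open>?A \<subseteq> ?K\<close> ideal_plus_upper2[OF J]])
    show "?K \<subseteq> ?A + principal_ideal (y ^ n)"
      by (rule set_plus_mono2[OF ideal_plus_upper1[OF is_ideal_principal_ideal] order_refl])
  qed
  have "J + principal_ideal y \<subseteq> colon_ideal ?A (y ^ n)"
    by (rule plus_principal_subset_colon_power[OF J])
  then have "length_le (colon_ideal ?A (y ^ n)) UNIV k"
    using length_le_mono[OF len] by blast
  then have "length_le ?A ?K k"
    using length_le_plus_principal eq by metis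
  then have "length_le ?A UNIV (k + n * k)"
    using length_le_add[OF ideals(2) is_ideal_UNIV \<open>?A \<subseteq> ?K\<close> subset_UNIV _ Suc.IH] by simp
  then show ?case
    by (simp add: add.commute)
qed

lemma length_le_power_principals:
  assumes "is_ideal J" "length_le (J + sum_principals ys) UNIV k"
  shows "length_le (J + sum_principals (map (\<lambda>y. y ^ n) ys)) UNIV (n ^ length ys * k)"
  using assms
proof (induction ys arbitrary: J k)
  case Nil
  then show ?case by simp
next
  case (Cons y ys)
  let ?S = "sum_principals ys"
  have "is_ideal (J + ?S)"
    using Cons.prems(1) is_ideal_plus is_ideal_sum_principals by blast
  moreover have "length_le ((J + ?S) + principal_ideal y) UNIV k"
    using Cons.prems(2) by (simp add: ac_simps)
  ultimately have "length_le ((J + ?S) + principal_ideal (y ^ n)) UNIV (n * k)"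
    by (rule length_le_power_principal)
  then have "length_le ((J + principal_ideal (y ^ n)) + ?S) UNIV (n * k)"
    by (simp add: ac_simps)
  then have "length_le ((J + principal_ideal (y ^ n)) + sum_principals (map (\<lambda>y. y ^ n) ys)) UNIV
      (n ^ length ys * (n * k))"
    using Cons.IH Cons.prems(1) is_ideal_plus is_ideal_principal_ideal by blast
  then show ?case
    by (simp add: ac_simps)
qed

section \<open>Noetherian rings and prime ideals\<close>

lemma finite_subset_Union_chain:
  assumes "\<forall>A\<in>C. \<forall>B\<in>C. A \<subseteq> B \<or> B \<subseteq> A" "C \<noteq> {}" "finite S" "S \<subseteq> \<Union>C"
  shows "\<exists>X\<in>C. S \<subseteq> X"
  using assms(3,4)
proof (induction S rule: finite_induct)
  case empty
  then show ?case using assms(2) by blast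
next
  case (insert s S)
  then obtain X Y where XY: "X \<in> C" "S \<subseteq> X" "Y \<in> C" "s \<in> Y"
    by blast
  then consider "X \<subseteq> Y" | "Y \<subseteq> X"
    using assms(1) by blast
  then show ?case
    using XY by cases blast+
qed

lemma is_ideal_Union_chain:
  assumes "\<forall>A\<in>C. \<forall>B\<in>C. A \<subseteq> B \<or> B \<subseteq> A" "C \<noteq> {}" "\<forall>A\<in>C. is_ideal A"
  shows "is_ideal (\<Union>C)"
  unfolding is_ideal_def
proof (intro conjI ballI allI)
  show "0 \<in> \<Union>C"
    using assms(2,3) ideal_zero_mem by blast
next
  fix a b assume "a \<in> \<Union>C" "b \<in> \<Union>C"
  then obtain X where "X \<in> C" "a \<in> X" "b \<in> X"
    using assms(1) by blast
  then show "a + b \<in> \<Union>C"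
    using assms(3) ideal_add_mem by blast
next
  fix a r assume "a \<in> \<Union>C"
  then show "r * a \<in> \<Union>C"
    using assms(3) ideal_mult_left by blast
qed

lemma noetherian_Union_chain_mem:
  assumes "noetherian_ring TYPE('a::comm_ring_1)"
    and "\<forall>A\<in>C. \<forall>B\<in>C. A \<subseteq> B \<or> B \<subseteq> (A::'a set)" "C \<noteq> {}" "\<forall>A\<in>C. is_ideal A"
  shows "\<Union>C \<in> C"
proof -
  obtain S where S: "finite S" "\<Union>C = ideal_gen S"
    using assms(1) is_ideal_Union_chain[OF assms(2-4)] unfolding noetherian_ring_def by blast
  then obtain X where X: "X \<in> C" "S \<subseteq> X"
    using finite_subset_Union_chain[OF assms(2,3) S(1)] subset_ideal_gen[of S] by auto
  then have "\<Union>C \<subseteq> X"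
    using S(2) ideal_gen_least[of X S] assms(4) by auto
  then show ?thesis
    using X(1) Union_upper[OF X(1)] by (metis subset_antisym)
qed

lemma noetherian_maximal_element:
  assumes "noetherian_ring TYPE('a::comm_ring_1)" "F \<noteq> {}" "\<forall>I\<in>F. is_ideal (I::'a set)"
  shows "\<exists>M\<in>F. \<forall>X\<in>F. M \<subseteq> X \<longrightarrow> X = M"
proof (rule Zorn_Lemma2, intro ballI)
  fix C assume "C \<in> chains F"
  then have C: "C \<subseteq> F" "\<forall>A\<in>C. \<forall>B\<in>C. A \<subseteq> B \<or> B \<subseteq> A"
    unfolding chains_def chain_subset_def by auto
  show "\<exists>U\<in>F. \<forall>X\<in>C. X \<subseteq> U"
  proof (cases "C = {}")
    case False
    then have "\<Union>C \<in> C"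
      using noetherian_Union_chain_mem[OF assms(1) C(2)] C(1) assms(3) by blast
    then show ?thesis using C(1) by blast
  next
    case True
    then show ?thesis using assms(2) by blast
  qed
qed

lemma noetherian_maximal_ideal_above:
  assumes "noetherian_ring TYPE('a::comm_ring_1)" "is_ideal (P::'a set)" "P \<noteq> UNIV"
  shows "\<exists>M. maximal_ideal M \<and> P \<subseteq> M"
proof -
  let ?F = "{K. is_ideal K \<and> K \<noteq> UNIV \<and> P \<subseteq> K}"
  have F: "?F \<noteq> {}" "\<forall>I\<in>?F. is_ideal I"
    using assms(2,3) by blast+
  obtain M where M: "M \<in> ?F" "\<forall>X\<in>?F. M \<subseteq> X \<longrightarrow> X = M"
    using noetherian_maximal_element[OF assms(1) F] by (elim bexE)
  have "J = M \<or> J = UNIV" if "is_ideal J" "M \<subseteq> J" for J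
  proof (cases "J = UNIV")
    case False
    then have "J \<in> ?F"
      using that M(1) by blast
    then show ?thesis
      using M(2) that(2) by blast
  qed simp
  then have "maximal_ideal M"
    unfolding maximal_ideal_def using M(1) by blast
  then show ?thesis
    using M(1) by blast
qed

lemma local_ring_ideal_subset:
  assumes "noetherian_ring TYPE('a::comm_ring_1)" "local_ring (m::'a set)" "is_ideal P" "P \<noteq> UNIV"
  shows "P \<subseteq> m"
  using noetherian_maximal_ideal_above[OF assms(1,3,4)] assms(2) unfolding local_ring_def by blast

lemma maximal_ideal_prime:
  assumes "maximal_ideal m"
  shows "prime_ideal m"
proof -
  have m: "is_ideal m" "m \<noteq> UNIV"
    using assms unfolding maximal_ideal_def by auto
  have "b \<in> m" if ab: "a * b \<in> m" and a: "a \<notin> m" for a b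
  proof -
    have "m \<subseteq> m + principal_ideal a" "a \<in> m + principal_ideal a"
      using ideal_plus_upper1[OF is_ideal_principal_ideal] ideal_plus_upper2[OF m(1)] principal_ideal_self
      by blast+
    moreover have "is_ideal (m + principal_ideal a)"
      by (rule is_ideal_plus[OF m(1) is_ideal_principal_ideal])
    ultimately have "m + principal_ideal a = UNIV"
      using assms a unfolding maximal_ideal_def by blast
    then obtain u r where u: "u \<in> m" "1 = u + r * a"
      unfolding set_plus_def principal_ideal_def by blast
    then have "b = u * b + r * (a * b)"
      by (metis mult_1 distrib_right mult.assoc)
    then show "b \<in> m"
      using ideal_add_mem[OF m(1) ideal_mult_right[OF m(1) u(1), of b] ideal_mult_left[OF m(1) ab, of r]]
      by simp
  qed
  then show ?thesis
    unfolding prime_ideal_def using m by blast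
qed

lemma prime_ideal_is_ideal: "prime_ideal P \<Longrightarrow> is_ideal P"
  unfolding prime_ideal_def by blast

lemma prime_ideal_neq_UNIV: "prime_ideal P \<Longrightarrow> P \<noteq> UNIV"
  unfolding prime_ideal_def by blast

lemma one_notin_prime_ideal: "prime_ideal P \<Longrightarrow> 1 \<notin> P"
  using ideal_eq_UNIV_if_one_mem prime_ideal_neq_UNIV prime_ideal_is_ideal by blast

lemma prime_ideal_mult_notin: "prime_ideal P \<Longrightarrow> a \<notin> P \<Longrightarrow> b \<notin> P \<Longrightarrow> a * b \<notin> P"
  unfolding prime_ideal_def by blast
text \<open>\<open>J\<close> contains a product \<open>P\<^sub>1 \<cdots> P\<^sub>n\<close> of primes above \<open>J\<close>; the product ideal is
  represented by its generators \<open>z\<^sub>1 \<cdots> z\<^sub>n\<close> with \<open>z\<^sub>i \<in> P\<^sub>i\<close>.\<close>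

definition contains_prime_product :: "'a::comm_ring_1 set \<Rightarrow> 'a set list \<Rightarrow> bool" where
  "contains_prime_product J Ps \<longleftrightarrow> (\<forall>P\<in>set Ps. prime_ideal P \<and> J \<subseteq> P) \<and>
     (\<forall>zs. list_all2 (\<in>) zs Ps \<longrightarrow> prod_list zs \<in> J)"

lemma mult_mem_of_plus_principal:
  assumes "is_ideal M" "a * b \<in> M" "u \<in> M + principal_ideal a" "v \<in> M + principal_ideal b"
  shows "u * v \<in> M"
proof -
  obtain m1 r where 1: "m1 \<in> M" "u = m1 + r * a"
    using assms(3) unfolding set_plus_def principal_ideal_def by blast
  obtain m2 s where 2: "m2 \<in> M" "v = m2 + s * b"
    using assms(4) unfolding set_plus_def principal_ideal_def by blast
  have "u * v = m1 * v + (r * a) * m2 + (r * s) * (a * b)"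
    using 1 2 by (simp add: algebra_simps)
  then show ?thesis
    using ideal_mult_right[OF assms(1) 1(1)] ideal_mult_left[OF assms(1) 2(1)]
      ideal_mult_left[OF assms(1) assms(2)] ideal_add_mem[OF assms(1)] by simp
qed

lemma contains_prime_product_append:
  assumes "is_ideal M" "a * b \<in> M"
    "contains_prime_product (M + principal_ideal a) Pa" "contains_prime_product (M + principal_ideal b) Pb"
  shows "contains_prime_product M (Pa @ Pb)"
proof -
  have "M \<subseteq> M + principal_ideal a" "M \<subseteq> M + principal_ideal b"
    using ideal_plus_upper1[OF is_ideal_principal_ideal] by blast+
  then have "prime_ideal P \<and> M \<subseteq> P" if "P \<in> set Pa \<union> set Pb" for P
    using that assms(3,4) unfolding contains_prime_product_def by blast
  moreover have "prod_list zs \<in> M" if zs: "list_all2 (\<in>) zs (Pa @ Pb)" for zs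
  proof -
    obtain us vs where uv: "zs = us @ vs" "list_all2 (\<in>) us Pa" "list_all2 (\<in>) vs Pb"
      using zs by (auto simp: list_all2_append2)
    then have "prod_list us \<in> M + principal_ideal a" "prod_list vs \<in> M + principal_ideal b"
      using assms(3,4) unfolding contains_prime_product_def by auto
    then show "prod_list zs \<in> M"
      using mult_mem_of_plus_principal[OF assms(1,2)] uv(1) by simp
  qed
  ultimately show ?thesis
    unfolding contains_prime_product_def by auto
qed

text \<open>A maximal counterexample \<open>M\<close> is not prime, and for \<open>a * b \<in> M\<close> with \<open>a, b \<notin> M\<close> the
  larger ideals \<open>M + (a)\<close> and \<open>M + (b)\<close> contain prime products whose concatenation works for \<open>M\<close>.\<close>

lemma noetherian_contains_prime_product:
  assumes "noetherian_ring TYPE('a::comm_ring_1)" "is_ideal (J::'a set)"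
  shows "\<exists>Ps. contains_prime_product J Ps"
proof (rule ccontr)
  assume none: "\<not> ?thesis"
  let ?F = "{K::'a set. is_ideal K \<and> \<not> (\<exists>Ps. contains_prime_product K Ps)}"
  have F: "?F \<noteq> {}" "\<forall>I\<in>?F. is_ideal I"
    using assms(2) none by blast+
  obtain M where M: "M \<in> ?F" "\<forall>X\<in>?F. M \<subseteq> X \<longrightarrow> X = M"
    using noetherian_maximal_element[OF assms(1) F] by (elim bexE)
  have "contains_prime_product UNIV []"
    by (simp add: contains_prime_product_def)
  moreover have "contains_prime_product M [M]" if "prime_ideal M"
    using that by (auto simp: contains_prime_product_def list_all2_Cons2)
  ultimately have "\<not> prime_ideal M" "M \<noteq> UNIV"
    using M(1) by blast+
  then obtain a b where ab: "a * b \<in> M" "a \<notin> M" "b \<notin> M"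
    using M(1) unfolding prime_ideal_def by blast
  have "\<exists>Ps. contains_prime_product (M + principal_ideal c) Ps" if "c \<notin> M" for c
  proof (rule ccontr)
    assume "\<nexists>Ps. contains_prime_product (M + principal_ideal c) Ps"
    then have "M + principal_ideal c \<in> ?F"
      using M(1) is_ideal_plus is_ideal_principal_ideal by blast
    moreover have "M \<subseteq> M + principal_ideal c" "c \<in> M + principal_ideal c"
      using M(1) ideal_plus_upper1[OF is_ideal_principal_ideal] ideal_plus_upper2 principal_ideal_self
      by blast+
    ultimately show False
      using M(2) that by blast
  qed
  then obtain Pa Pb where "contains_prime_product (M + principal_ideal a) Pa"
      "contains_prime_product (M + principal_ideal b) Pb"
    using ab by blast
  then have "contains_prime_product M (Pa @ Pb)"
    using contains_prime_product_append M(1) ab(1) by blast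
  then show False
    using M(1) by blast
qed
lemma prime_ideal_avoids_product:
  assumes "prime_ideal Q" "\<forall>P\<in>set Ps. \<exists>z\<in>P. z \<notin> Q"
  shows "\<exists>zs. list_all2 (\<in>) zs Ps \<and> prod_list zs \<notin> Q"
  using assms(2)
proof (induction Ps)
  case Nil
  then show ?case using one_notin_prime_ideal[OF assms(1)] by simp
next
  case (Cons P Ps)
  then obtain zs z where "list_all2 (\<in>) zs Ps" "prod_list zs \<notin> Q" "z \<in> P" "z \<notin> Q"
    by auto
  then have "list_all2 (\<in>) (z # zs) (P # Ps) \<and> prod_list (z # zs) \<notin> Q"
    using prime_ideal_mult_notin[OF assms(1)] by simp
  then show ?case by blast
qed

lemma prime_ideal_contains_factor:
  assumes "prime_ideal Q" "\<forall>zs. list_all2 (\<in>) zs Ps \<longrightarrow> prod_list zs \<in> Q"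
  shows "\<exists>P\<in>set Ps. P \<subseteq> Q"
  using prime_ideal_avoids_product[OF assms(1), of Ps] assms(2) by blast

lemma prod_list_mem_factor:
  "list_all2 (\<in>) zs Ps \<Longrightarrow> Q \<in> set Ps \<Longrightarrow> is_ideal Q \<Longrightarrow> prod_list zs \<in> Q"
proof (induction zs Ps rule: list_all2_induct)
  case (Cons z zs P Ps)
  then show ?case
    using ideal_mult_left ideal_mult_right by (cases "Q = P") auto
qed simp

lemma exists_mem_notin_prime_ideal_mem_ideals:
  assumes "is_ideal A" "prime_ideal P" "\<not> A \<subseteq> P" "\<forall>Q\<in>set Qs. is_ideal Q \<and> \<not> Q \<subseteq> P"
  shows "\<exists>c\<in>A. c \<notin> P \<and> (\<forall>Q\<in>set Qs. c \<in> Q)"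
proof -
  obtain zs where zs: "list_all2 (\<in>) zs Qs" "prod_list zs \<notin> P"
    using prime_ideal_avoids_product[OF assms(2), of Qs] assms(4) by blast
  obtain a where a: "a \<in> A" "a \<notin> P"
    using assms(3) by blast
  have "a * prod_list zs \<in> Q" if "Q \<in> set Qs" for Q
    using ideal_mult_left[OF _ prod_list_mem_factor[OF zs(1) that]] assms(4) that by simp
  moreover have "a * prod_list zs \<in> A" "a * prod_list zs \<notin> P"
    using ideal_mult_right[OF assms(1) a(1)] prime_ideal_mult_notin[OF assms(2) a(2) zs(2)] by auto
  ultimately show ?thesis
    by blast
qed

lemma add_avoids_prime_ideals:
  assumes "prime_ideal P" "a \<in> P" "c \<notin> P" "\<forall>Q\<in>set Ps. prime_ideal Q \<and> a \<notin> Q \<and> c \<in> Q"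
  shows "\<forall>Q\<in>set (P # Ps). a + c \<notin> Q"
proof -
  have "a + c \<notin> P"
    using ideal_diff_mem[OF prime_ideal_is_ideal[OF assms(1)], of "a + c" a] assms(2,3) by auto
  moreover have "a + c \<notin> Q" if "Q \<in> set Ps" for Q
    using ideal_diff_mem[OF prime_ideal_is_ideal, of Q "a + c" c] assms(4) that by auto
  ultimately show ?thesis by simp
qed

lemma prime_avoidance:
  assumes "is_ideal A" "\<forall>P\<in>set Ps. prime_ideal P \<and> \<not> A \<subseteq> P"
  shows "\<exists>a\<in>A. \<forall>P\<in>set Ps. a \<notin> P"
  using assms(2)
proof (induction "length Ps" arbitrary: Ps rule: less_induct)
  case less
  show ?case
  proof (cases Ps)
    case Nil
    then show ?thesis using ideal_zero_mem[OF assms(1)] by auto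
  next
    case (Cons P Ps')
    show ?thesis
    proof (cases "\<exists>Q\<in>set Ps'. Q \<subseteq> P")
      case True
      then obtain Q where Q: "Q \<in> set Ps'" "Q \<subseteq> P"
        by blast
      have "length (P # removeAll Q Ps') < length Ps"
        using length_removeAll_less[OF Q(1)] Cons by simp
      then obtain a where "a \<in> A" "\<forall>R\<in>set (P # removeAll Q Ps'). a \<notin> R"
        using less Cons by (metis set_ConsD set_removeAll Diff_iff list.set_intros)
      then show ?thesis
        using Q Cons by auto
    next
      case False
      have P: "prime_ideal P" "\<not> A \<subseteq> P"
        using less.prems Cons by auto
      have "\<forall>Q\<in>set Ps'. is_ideal Q \<and> \<not> Q \<subseteq> P"
        using False less.prems Cons prime_ideal_is_ideal by auto
      then obtain c where c: "c \<in> A" "c \<notin> P" "\<forall>Q\<in>set Ps'. c \<in> Q"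
        using exists_mem_notin_prime_ideal_mem_ideals[OF assms(1) P] by blast
      have "length Ps' < length Ps" "\<forall>R\<in>set Ps'. prime_ideal R \<and> \<not> A \<subseteq> R"
        using less.prems Cons by auto
      then obtain a where a: "a \<in> A" "\<forall>R\<in>set Ps'. a \<notin> R"
        using less.hyps by blast
      show ?thesis
        using add_avoids_prime_ideals[OF P(1) _ c(2), of a Ps'] less.prems Cons c(3)
          ideal_add_mem[OF assms(1) a(1) c(1)] a
        by (cases "a \<in> P") auto
    qed
  qed
qed
lemma nonzerodivisor_power_cancel:
  assumes "\<forall>y. x * y = 0 \<longrightarrow> y = 0" "x ^ j * w = (0::'a::comm_ring_1)"
  shows "w = 0"
  using assms(2)
proof (induction j)
  case (Suc j)
  then show ?case
    using assms(1) by (simp add: mult.assoc)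
qed simp

lemma prime_product_element_power_mult:
  assumes "prime_ideal Q" "\<forall>P\<in>set Ps. P \<subseteq> Q \<longrightarrow> x \<in> P"
  shows "\<exists>zs j w. list_all2 (\<in>) zs Ps \<and> prod_list zs = x ^ j * w \<and> w \<notin> Q"
  using assms(2)
proof (induction Ps)
  case Nil
  then show ?case
    using one_notin_prime_ideal[OF assms(1)] by (intro exI[of _ "[]"] exI[of _ 0] exI[of _ 1]) simp
next
  case (Cons P Ps)
  then obtain zs j w where IH: "list_all2 (\<in>) zs Ps" "prod_list zs = x ^ j * w" "w \<notin> Q"
    by auto
  show ?case
  proof (cases "P \<subseteq> Q")
    case True
    then have "list_all2 (\<in>) (x # zs) (P # Ps) \<and> prod_list (x # zs) = x ^ Suc j * w"
      using Cons.prems IH by (simp add: mult.assoc)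
    then show ?thesis
      using IH(3) by blast
  next
    case False
    then obtain z where z: "z \<in> P" "z \<notin> Q"
      by blast
    then have "list_all2 (\<in>) (z # zs) (P # Ps) \<and> prod_list (z # zs) = x ^ j * (z * w) \<and> z * w \<notin> Q"
      using IH prime_ideal_mult_notin[OF assms(1) z(2) IH(3)] by (simp add: ac_simps)
    then show ?thesis
      by blast
  qed
qed

text \<open>A prime containing a nonzerodivisor \<open>x\<close> is not minimal: otherwise, in a prime product
  inside \<open>(0)\<close>, every factor below it would contain \<open>x\<close>, giving \<open>x\<^sup>j w = 0\<close> with \<open>w \<noteq> 0\<close>.\<close>

lemma nonzerodivisor_prime_ideal_not_minimal:
  assumes "noetherian_ring TYPE('a::comm_ring_1)" "\<forall>y. x * y = 0 \<longrightarrow> y = 0"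
    and "prime_ideal (Q::'a set)" "x \<in> Q"
  shows "\<exists>P. prime_ideal P \<and> P \<subset> Q"
proof -
  obtain Ps where Ps: "contains_prime_product {0::'a} Ps"
    using noetherian_contains_prime_product[OF assms(1) is_ideal_zero] by blast
  show ?thesis
  proof (cases "\<exists>P\<in>set Ps. P \<subseteq> Q \<and> x \<notin> P")
    case True
    then obtain P where "P \<in> set Ps" "P \<subseteq> Q" "x \<notin> P"
      by blast
    moreover from this(1) have "prime_ideal P"
      using Ps unfolding contains_prime_product_def by blast
    ultimately show ?thesis
      using assms(4) by blast
  next
    case False
    then have "\<forall>P\<in>set Ps. P \<subseteq> Q \<longrightarrow> x \<in> P"
      by blast
    then obtain zs j w where zs: "list_all2 (\<in>) zs Ps" "prod_list zs = x ^ j * w" "w \<notin> Q"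
      using prime_product_element_power_mult[OF assms(3)] by metis
    then have "x ^ j * w = 0"
      using Ps unfolding contains_prime_product_def by auto
    then have "w = 0"
      by (rule nonzerodivisor_power_cancel[OF assms(2)])
    then show ?thesis
      using zs(3) ideal_zero_mem[OF prime_ideal_is_ideal[OF assms(3)]] by simp
  qed
qed

lemma prime_chain_Cons:
  assumes "prime_ideal P" "P \<subset> Q 0" "prime_chain Q k"
  shows "prime_chain (\<lambda>i. if i = 0 then P else Q (i - 1)) (Suc k)"
  unfolding prime_chain_def
proof (intro conjI allI impI)
  fix i assume "i \<le> Suc k"
  then show "prime_ideal (if i = 0 then P else Q (i - 1))"
    using assms unfolding prime_chain_def by auto
next
  fix i assume "i < Suc k"
  then show "(if i = 0 then P else Q (i - 1)) \<subset> (if Suc i = 0 then P else Q (Suc i - 1))"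
    using assms unfolding prime_chain_def by (cases i) auto
qed

lemma nonzerodivisor_notin_prime_chain:
  assumes "noetherian_ring TYPE('a::comm_ring_1)" "krull_dim TYPE('a) d"
    and "\<forall>y. x * y = 0 \<longrightarrow> y = (0::'a)" "prime_chain Q d"
  shows "x \<notin> Q 0"
proof
  assume "x \<in> Q 0"
  moreover have "prime_ideal (Q 0)"
    using assms(4) unfolding prime_chain_def by simp
  ultimately obtain P where "prime_ideal P" "P \<subset> Q 0"
    using nonzerodivisor_prime_ideal_not_minimal[OF assms(1,3)] by blast
  then have "prime_chain (\<lambda>i. if i = 0 then P else Q (i - 1)) (Suc d)"
    using prime_chain_Cons assms(4) by blast
  then show False
    using assms(2) unfolding krull_dim_def by blast
qed

section \<open>Powers of the maximal ideal and parameters\<close>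

lemma is_ideal_ideal_pow: "is_ideal (ideal_pow m n)"
  unfolding ideal_pow_def by (rule is_ideal_ideal_gen)

lemma prod_list_mem_ideal_pow:
  assumes "length xs = n" "set xs \<subseteq> m"
  shows "prod_list xs \<in> ideal_pow m n"
proof -
  have "prod_list xs \<in> {prod_list xs | xs. length xs = n \<and> set xs \<subseteq> m}"
    using assms by blast
  then show ?thesis
    unfolding ideal_pow_def using subset_ideal_gen by (rule subsetD[rotated])
qed

lemma ideal_pow_subset:
  assumes "is_ideal J" "\<And>xs. length xs = n \<Longrightarrow> set xs \<subseteq> m \<Longrightarrow> prod_list xs \<in> J"
  shows "ideal_pow m n \<subseteq> J"
  unfolding ideal_pow_def by (rule ideal_gen_least[OF assms(1)]) (use assms(2) in blast)

lemma power_mem_ideal_pow: "y \<in> m \<Longrightarrow> y ^ n \<in> ideal_pow m n"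
  using prod_list_mem_ideal_pow[of "replicate n y" n m] by (auto simp: set_replicate_conv_if)

lemma ideal_pow_0: "ideal_pow m 0 = UNIV"
  using prod_list_mem_ideal_pow[of "[]" 0 m] ideal_eq_UNIV_if_one_mem[OF is_ideal_ideal_pow] by simp

lemma ideal_pow_Suc_subset: "ideal_pow m (Suc n) \<subseteq> ideal_pow m n"
proof (rule ideal_pow_subset[OF is_ideal_ideal_pow])
  fix xs :: "'a list" assume xs: "length xs = Suc n" "set xs \<subseteq> m"
  then obtain y ys where "xs = y # ys"
    by (cases xs) auto
  with xs have "prod_list xs = y * prod_list ys" "prod_list ys \<in> ideal_pow m n"
    using prod_list_mem_ideal_pow[of ys n m] by auto
  then show "prod_list xs \<in> ideal_pow m n"
    using ideal_mult_left[OF is_ideal_ideal_pow] by simp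
qed

lemma mult_mem_ideal_pow_Suc:
  assumes "r \<in> m" "z \<in> ideal_pow m n"
  shows "r * z \<in> ideal_pow m (Suc n)"
proof -
  let ?X = "{z. \<forall>r\<in>m. r * z \<in> ideal_pow m (Suc n)}"
  have "is_ideal ?X"
    using is_ideal_ideal_pow[of m "Suc n"] unfolding is_ideal_def
    by (auto simp: distrib_left mult.left_commute)
  moreover have "prod_list xs \<in> ?X" if "length xs = n" "set xs \<subseteq> m" for xs
    using prod_list_mem_ideal_pow[of "_ # xs" "Suc n" m] that by simp
  ultimately have "ideal_pow m n \<subseteq> ?X"
    by (rule ideal_pow_subset)
  then show ?thesis
    using assms by blast
qed

text \<open>Finite generators \<open>s\<^sub>i\<close> of \<open>m\<^sup>n\<close> satisfy \<open>m s\<^sub>i \<subseteq> m\<^sup>n\<^sup>+\<^sup>1\<close>, so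
  \<open>m\<^sup>n/m\<^sup>n\<^sup>+\<^sup>1\<close> has finite length.\<close>

lemma finite_length_ideal_pow:
  assumes "noetherian_ring TYPE('a::comm_ring_1)" "maximal_ideal (m::'a set)"
  shows "\<exists>l. length_le (ideal_pow m n) UNIV l"
proof (induction n)
  case 0
  then show ?case
    using length_le_refl ideal_pow_0 by metis
next
  case (Suc n)
  then obtain l where l: "length_le (ideal_pow m n) UNIV l"
    by blast
  obtain S where S: "finite S" "ideal_pow m n = ideal_gen S"
    using assms(1) is_ideal_ideal_pow unfolding noetherian_ring_def by blast
  obtain ss where ss: "set ss = S"
    using finite_list[OF S(1)] by blast
  let ?A = "ideal_pow m (Suc n)" and ?B = "ideal_pow m n"
  have ss_B: "set ss \<subseteq> ?B"
    using ss S(2) subset_ideal_gen by metis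
  have "?A + sum_principals ss = ?B"
  proof
    show "?A + sum_principals ss \<subseteq> ?B"
      by (rule ideal_plus_least[OF is_ideal_ideal_pow ideal_pow_Suc_subset
            sum_principals_subset[OF is_ideal_ideal_pow ss_B]])
    have "set ss \<subseteq> ?A + sum_principals ss"
      using principal_ideal_subset_sum_principals principal_ideal_self
        ideal_plus_upper2[OF is_ideal_ideal_pow] by blast
    then show "?B \<subseteq> ?A + sum_principals ss"
      unfolding S(2) ss[symmetric]
      by (rule ideal_gen_least[OF is_ideal_plus[OF is_ideal_ideal_pow is_ideal_sum_principals]])
  qed
  moreover have "\<forall>s\<in>set ss. \<forall>r\<in>m. r * s \<in> ?A"
    using ss_B mult_mem_ideal_pow_Suc by blast
  ultimately have "length_le ?A ?B (length ss)"
    using length_le_plus_principals[OF assms(2) is_ideal_ideal_pow] by metis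
  then have "length_le ?A UNIV (length ss + l)"
    by (rule length_le_add[OF is_ideal_ideal_pow is_ideal_UNIV ideal_pow_Suc_subset subset_UNIV _ l])
  then show ?case
    by blast
qed
definition quot_dim_le :: "'a::comm_ring_1 set \<Rightarrow> nat \<Rightarrow> bool" where
  "quot_dim_le J k \<longleftrightarrow> \<not> (\<exists>P. prime_chain P (Suc k) \<and> J \<subseteq> P 0)"

text \<open>In dimension \<open>0\<close> all primes of a prime product inside \<open>J\<close> equal \<open>m\<close>, so \<open>m\<^sup>n \<subseteq> J\<close>.\<close>

lemma quot_dim_le_0_ideal_pow_subset:
  assumes "noetherian_ring TYPE('a::comm_ring_1)" "local_ring (m::'a set)" "is_ideal J" "quot_dim_le J 0"
  shows "\<exists>n. ideal_pow m n \<subseteq> J"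
proof -
  have m: "prime_ideal m"
    using assms(2) maximal_ideal_prime unfolding local_ring_def by blast
  obtain Ps where Ps: "contains_prime_product J Ps"
    using noetherian_contains_prime_product[OF assms(1,3)] by blast
  have all_m: "P = m" if "P \<in> set Ps" for P
  proof (rule ccontr)
    assume "P \<noteq> m"
    moreover have P: "prime_ideal P" "J \<subseteq> P"
      using Ps that unfolding contains_prime_product_def by auto
    moreover have "P \<subseteq> m"
      using local_ring_ideal_subset[OF assms(1,2)] P(1) prime_ideal_is_ideal prime_ideal_neq_UNIV by blast
    ultimately have "prime_chain (\<lambda>i. if i = 0 then P else m) (Suc 0)"
      using m unfolding prime_chain_def by auto
    then show False
      using assms(4) P(2) unfolding quot_dim_le_def by fastforce
  qed
  have "list_all2 (\<in>) xs Ps" if xs: "length xs = length Ps" "set xs \<subseteq> m" for xs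
  proof (rule list_all2_all_nthI)
    fix i assume "i < length xs"
    then show "xs ! i \<in> Ps ! i"
      using xs all_m nth_mem by (metis subsetD)
  qed (use xs in simp)
  then have "ideal_pow m (length Ps) \<subseteq> J"
    using Ps unfolding contains_prime_product_def by (intro ideal_pow_subset[OF assms(3)]) blast
  then show ?thesis
    by blast
qed

text \<open>A prime chain of length \<open>k + 1\<close> above \<open>J + (y)\<close> starts at a prime \<open>Q\<^sub>0 \<noteq> m\<close> containing
  a factor \<open>P\<close> of the prime product; as \<open>y \<in> Q\<^sub>0 - P\<close>, prepending \<open>P\<close> gives a chain of length
  \<open>k + 2\<close> above \<open>J\<close>.\<close>

lemma quot_dim_le_plus_principal:
  assumes "noetherian_ring TYPE('a::comm_ring_1)" "local_ring (m::'a set)" "is_ideal J"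
    "quot_dim_le J (Suc k)" "contains_prime_product J Ps" "\<forall>P\<in>set Ps. P \<noteq> m \<longrightarrow> y \<notin> P"
  shows "quot_dim_le (J + principal_ideal y) k"
  unfolding quot_dim_le_def
proof
  assume "\<exists>Q. prime_chain Q (Suc k) \<and> J + principal_ideal y \<subseteq> Q 0"
  then obtain Q where Q: "prime_chain Q (Suc k)" "J + principal_ideal y \<subseteq> Q 0"
    by blast
  have Q01: "prime_ideal (Q 0)" "prime_ideal (Q 1)" "Q 0 \<subset> Q 1"
    using Q(1) unfolding prime_chain_def by auto
  have JQ: "J \<subseteq> Q 0" "y \<in> Q 0"
    using Q(2) ideal_plus_upper1[OF is_ideal_principal_ideal] ideal_plus_upper2[OF assms(3)]
      principal_ideal_self by blast+
  then have "\<forall>zs. list_all2 (\<in>) zs Ps \<longrightarrow> prod_list zs \<in> Q 0"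
    using assms(5) unfolding contains_prime_product_def by blast
  then obtain P where P: "P \<in> set Ps" "P \<subseteq> Q 0"
    using prime_ideal_contains_factor[OF Q01(1)] by blast
  have "Q 1 \<subseteq> m"
    using local_ring_ideal_subset[OF assms(1,2) prime_ideal_is_ideal prime_ideal_neq_UNIV] Q01(2) by blast
  then have "P \<noteq> m"
    using P(2) Q01(3) by auto
  then have "y \<notin> P"
    using assms(6) P(1) by blast
  then have "P \<subset> Q 0"
    using P(2) JQ(2) by blast
  moreover have "prime_ideal P" "J \<subseteq> P"
    using assms(5) P(1) unfolding contains_prime_product_def by blast+
  ultimately have "prime_chain (\<lambda>i. if i = 0 then P else Q (i - 1)) (Suc (Suc k))"
    using prime_chain_Cons Q(1) by blast
  then show False
    using assms(4) \<open>J \<subseteq> P\<close> unfolding quot_dim_le_def by fastforce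
qed

lemma quot_dim_le_Suc_plus_principal:
  assumes "noetherian_ring TYPE('a::comm_ring_1)" "local_ring (m::'a set)" "is_ideal J"
    "quot_dim_le J (Suc k)"
  shows "\<exists>y\<in>m. quot_dim_le (J + principal_ideal y) k"
proof -
  have "maximal_ideal m"
    using assms(2) unfolding local_ring_def by blast
  then have m: "is_ideal m" "prime_ideal m"
    using maximal_ideal_prime prime_ideal_is_ideal by blast+
  obtain Ps where Ps: "contains_prime_product J Ps"
    using noetherian_contains_prime_product[OF assms(1,3)] by blast
  have "P \<subseteq> m" if "prime_ideal P" for P
    using local_ring_ideal_subset[OF assms(1,2)] that prime_ideal_is_ideal prime_ideal_neq_UNIV by blast
  then have "\<forall>P\<in>set (filter (\<lambda>P. P \<noteq> m) Ps). prime_ideal P \<and> \<not> m \<subseteq> P"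
    using Ps unfolding contains_prime_product_def by fastforce
  then obtain y where "y \<in> m" "\<forall>P\<in>set (filter (\<lambda>P. P \<noteq> m) Ps). y \<notin> P"
    using prime_avoidance[OF m(1)] by blast
  then have "y \<in> m" "\<forall>P\<in>set Ps. P \<noteq> m \<longrightarrow> y \<notin> P"
    by auto
  then show ?thesis
    using quot_dim_le_plus_principal[OF assms Ps] by blast
qed

lemma exists_parameters:
  assumes "noetherian_ring TYPE('a::comm_ring_1)" "local_ring (m::'a set)" "is_ideal J" "quot_dim_le J k"
  shows "\<exists>ys n. length ys = k \<and> set ys \<subseteq> m \<and> ideal_pow m n \<subseteq> J + sum_principals ys"
  using assms(3,4)
proof (induction k arbitrary: J)
  case 0
  then show ?case
    using quot_dim_le_0_ideal_pow_subset[OF assms(1,2)] by simp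
next
  case (Suc k)
  then obtain y where y: "y \<in> m" "quot_dim_le (J + principal_ideal y) k"
    using quot_dim_le_Suc_plus_principal[OF assms(1,2)] by blast
  moreover have "is_ideal (J + principal_ideal y)"
    by (rule is_ideal_plus[OF Suc.prems(1) is_ideal_principal_ideal])
  ultimately obtain ys n where ys: "length ys = k" "set ys \<subseteq> m"
      "ideal_pow m n \<subseteq> (J + principal_ideal y) + sum_principals ys"
    using Suc.IH by blast
  have "(J + principal_ideal y) + sum_principals ys = J + sum_principals (y # ys)"
    by (simp add: add.assoc)
  then have "length (y # ys) = Suc k \<and> set (y # ys) \<subseteq> m \<and> ideal_pow m n \<subseteq> J + sum_principals (y # ys)"
    using y(1) ys by simp
  then show ?case
    by blast
qed

section \<open>The colength estimate\<close>

lemma quot_dim_le_principal_nonzerodivisor: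
  assumes "noetherian_ring TYPE('a::comm_ring_1)" "krull_dim TYPE('a) d"
    and "\<forall>y. x * y = 0 \<longrightarrow> y = (0::'a)"
  shows "quot_dim_le (principal_ideal x) (d - 1)"
  unfolding quot_dim_le_def
proof
  assume "\<exists>P. prime_chain P (Suc (d - 1)) \<and> principal_ideal x \<subseteq> P 0"
  then obtain P where P: "prime_chain P (Suc (d - 1))" "x \<in> P 0"
    using principal_ideal_self by blast
  show False
  proof (cases "d = 0")
    case True
    then show False
      using P(1) assms(2) unfolding krull_dim_def by auto
  next
    case False
    then show False
      using P nonzerodivisor_notin_prime_chain[OF assms] by simp
  qed
qed

lemma principal_ideal_eq_UNIV_if_dim_0:
  assumes "noetherian_ring TYPE('a::comm_ring_1)" "local_ring (m::'a set)" "krull_dim TYPE('a) 0"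
    and "\<forall>y. x * y = 0 \<longrightarrow> y = (0::'a)"
  shows "principal_ideal x = UNIV"
proof (rule ccontr)
  assume "principal_ideal x \<noteq> UNIV"
  then have "x \<in> m"
    using local_ring_ideal_subset[OF assms(1,2) is_ideal_principal_ideal] principal_ideal_self by blast
  moreover have "prime_ideal m"
    using assms(2) maximal_ideal_prime unfolding local_ring_def by blast
  then have "prime_chain (\<lambda>i. m) 0"
    unfolding prime_chain_def by simp
  ultimately show False
    using nonzerodivisor_notin_prime_chain[OF assms(1,3,4)] by blast
qed

lemma colon_ideal_eq_if_principal_eq_UNIV:
  assumes "is_ideal I" "principal_ideal x = UNIV"
  shows "colon_ideal I x = I"
proof
  obtain r where r: "r * x = 1"
    using assms(2) unfolding principal_ideal_def by (metis UNIV_I image_iff)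
  show "colon_ideal I x \<subseteq> I"
  proof
    fix z assume "z \<in> colon_ideal I x"
    then have "r * (z * x) \<in> I"
      using ideal_mult_left[OF assms(1)] unfolding colon_ideal_def by blast
    then show "z \<in> I"
      using r by (metis mult.left_commute mult.right_neutral)
  qed
qed (rule subset_colon_ideal[OF assms(1)])

text \<open>The exact sequence \<open>0 \<rightarrow> R/(I:x) \<rightarrow> R/I \<rightarrow> R/(I + (x)) \<rightarrow> 0\<close>, together with
  \<open>y\<^sub>i\<^sup>N \<in> m\<^sup>N \<subseteq> I\<close>, bounds the colength of \<open>I\<close> by that of \<open>(I : x)\<close> plus that of
  \<open>(x, y\<^sub>1\<^sup>N, \<dots>, y\<^sub>k\<^sup>N)\<close>.\<close>

lemma quot_length_le_colon_plus:
  assumes "noetherian_ring TYPE('a::comm_ring_1)" "maximal_ideal (m::'a set)"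
    and "is_ideal I" "ideal_pow m N \<subseteq> I" "is_ideal L" "I \<subseteq> L" "L \<subseteq> colon_ideal I x"
    and "set ys \<subseteq> m" "length_le (principal_ideal x + sum_principals ys) UNIV l"
  shows "quot_length I \<le> quot_length L + N ^ length ys * l"
proof -
  let ?C = "colon_ideal I x" and ?K = "I + principal_ideal x"
  have K: "is_ideal ?K" "I \<subseteq> ?K"
    using is_ideal_plus[OF assms(3) is_ideal_principal_ideal] ideal_plus_upper1[OF is_ideal_principal_ideal]
    by blast+
  obtain lN where lN: "length_le (ideal_pow m N) UNIV lN"
    using finite_length_ideal_pow[OF assms(1,2)] by blast
  have "length_le ?C UNIV lN"
    using length_le_mono[OF lN] assms(4) subset_colon_ideal[OF assms(3)] by blast
  then have "length_le ?C UNIV (quot_length ?C)"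
    by (rule length_le_quot_length[OF is_ideal_colon_ideal[OF assms(3)]])
  then have len_I_K: "length_le I ?K (quot_length ?C)"
    by (rule length_le_plus_principal)
  have "set (map (\<lambda>y. y ^ N) ys) \<subseteq> I"
    using assms(4,8) power_mem_ideal_pow[of _ m N] by auto
  then have "sum_principals (map (\<lambda>y. y ^ N) ys) \<subseteq> ?K"
    using sum_principals_subset[OF assms(3)] K(2) by blast
  then have "principal_ideal x + sum_principals (map (\<lambda>y. y ^ N) ys) \<subseteq> ?K"
    by (rule ideal_plus_least[OF K(1) ideal_plus_upper2[OF assms(3)]])
  then have len_K: "length_le ?K UNIV (N ^ length ys * l)"
    using length_le_mono[OF length_le_power_principals[OF is_ideal_principal_ideal assms(9)]] by blast
  have "quot_length I \<le> quot_length ?C + N ^ length ys * l"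
    by (rule quot_length_le[OF length_le_add[OF K(1) is_ideal_UNIV K(2) subset_UNIV len_I_K len_K]])
  moreover have "length_le L UNIV lN"
    using length_le_mono[OF lN] assms(4,6) by blast
  then have "quot_length ?C \<le> quot_length L"
    by (rule quot_length_antimono[OF assms(5,7)])
  ultimately show ?thesis
    by linarith
qed

lemma quot_length_le_colon_bound:
  assumes "noetherian_ring TYPE('a::comm_ring_1)" "local_ring (m::'a set)" "krull_dim TYPE('a) d"
    and "\<forall>y. x * y = 0 \<longrightarrow> y = (0::'a)"
  obtains l where "\<And>I L N. is_ideal I \<Longrightarrow> ideal_pow m N \<subseteq> I \<Longrightarrow> is_ideal L \<Longrightarrow> I \<subseteq> L \<Longrightarrow>
      L \<subseteq> colon_ideal I x \<Longrightarrow> quot_length I \<le> quot_length L + N ^ (d - 1) * l"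
proof -
  have m: "maximal_ideal m"
    using assms(2) unfolding local_ring_def by blast
  obtain ys n where ys: "length ys = d - 1" "set ys \<subseteq> m"
      "ideal_pow m n \<subseteq> principal_ideal x + sum_principals ys"
    using exists_parameters[OF assms(1,2) is_ideal_principal_ideal
        quot_dim_le_principal_nonzerodivisor[OF assms(1,3,4)]] by blast
  obtain l where "length_le (ideal_pow m n) UNIV l"
    using finite_length_ideal_pow[OF assms(1) m] by blast
  then have l: "length_le (principal_ideal x + sum_principals ys) UNIV l"
    using length_le_mono ys(3) by blast
  have "quot_length I \<le> quot_length L + N ^ (d - 1) * l"
    if hyps: "is_ideal I" "ideal_pow m N \<subseteq> I" "is_ideal L" "I \<subseteq> L" "L \<subseteq> colon_ideal I x" for I L N
    using quot_length_le_colon_plus[OF assms(1) m hyps ys(2) l] ys(1) by simp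
  then show ?thesis
    by (rule that)
qed

lemma powr_bound_if_nat_power_bound:
  fixes a :: "nat \<Rightarrow> real"
  assumes "p > 0" "d \<ge> 1" "\<forall>e. a e \<le> real ((c * p ^ e) ^ (d - 1) * l)"
  shows "\<exists>\<gamma>>0. \<forall>e. a e \<le> \<gamma> * real (p ^ e) powr (real d - 1)"
proof (intro exI[of _ "real (c ^ (d - 1) * l + 1)"] conjI allI)
  fix e
  have "real (p ^ e) powr (real d - 1) = real (p ^ e) ^ (d - 1)"
    using powr_realpow[of "real (p ^ e)" "d - 1"] assms(1,2) by (simp add: of_nat_diff)
  have "a e \<le> real (c ^ (d - 1) * l) * real (p ^ e) ^ (d - 1)"
    using assms(3) by (simp add: power_mult_distrib mult_ac)
  also have "\<dots> \<le> real (c ^ (d - 1) * l + 1) * real (p ^ e) ^ (d - 1)"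
    by (intro mult_right_mono) auto
  finally show "a e \<le> real (c ^ (d - 1) * l + 1) * real (p ^ e) powr (real d - 1)"
    using \<open>real (p ^ e) powr (real d - 1) = real (p ^ e) ^ (d - 1)\<close> by simp
qed (rule of_nat_0_less_iff[THEN iffD2], simp)

theorem mainTheorem19:
  fixes m :: "'a::comm_ring_1 set" and p d c :: nat and I L :: "nat \<Rightarrow> 'a set" and x :: 'a
  assumes "noetherian_ring TYPE('a)"
    and "local_ring m"
    and "krull_dim TYPE('a) d"
    and "prime (p::nat)" and "CHAR('a) = p"
    and "c > 0"
    and "\<forall>e. is_ideal (I (p ^ e))"
    and "\<forall>e. ideal_pow m (c * p ^ e) \<subseteq> I (p ^ e)"
    and "\<forall>y. x * y = 0 \<longrightarrow> y = 0"
    and "\<forall>e. is_ideal (L (p ^ e)) \<and> I (p ^ e) \<subseteq> L (p ^ e) \<and> L (p ^ e) \<subseteq> colon_ideal (I (p ^ e)) x"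
  shows "\<exists>\<gamma>::real. \<gamma> > 0 \<and> (\<forall>e. real (quot_length (I (p ^ e))) - real (quot_length (L (p ^ e)))
           \<le> \<gamma> * real (p ^ e) powr (real d - 1))"
proof (cases "d = 0")
  case True
  then have unit: "principal_ideal x = UNIV"
    using principal_ideal_eq_UNIV_if_dim_0[OF assms(1,2) _ assms(9)] assms(3) by simp
  have "L (p ^ e) = I (p ^ e)" for e
    using assms(10) colon_ideal_eq_if_principal_eq_UNIV[OF assms(7)[rule_format] unit] by blast
  then show ?thesis
    by (intro exI[of _ 1]) simp
next
  case False
  obtain l where l: "\<And>I L N. is_ideal I \<Longrightarrow> ideal_pow m N \<subseteq> I \<Longrightarrow> is_ideal L \<Longrightarrow> I \<subseteq> L \<Longrightarrow>
      L \<subseteq> colon_ideal I x \<Longrightarrow> quot_length I \<le> quot_length L + N ^ (d - 1) * l"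
    using quot_length_le_colon_bound[OF assms(1-3,9)] by blast
  have "quot_length (I (p ^ e)) \<le> quot_length (L (p ^ e)) + (c * p ^ e) ^ (d - 1) * l" for e
    using assms(7,8,10) by (intro l) auto
  then have "real (quot_length (I (p ^ e))) - real (quot_length (L (p ^ e)))
      \<le> real ((c * p ^ e) ^ (d - 1) * l)" for e
    using of_nat_le_iff[where 'a=real] by (metis add.commute diff_le_eq of_nat_add)
  then show ?thesis
    using powr_bound_if_nat_power_bound[of p d "\<lambda>e. real (quot_length (I (p ^ e))) - real (quot_length (L (p ^ e)))"]
      prime_gt_0_nat[OF assms(4)] False by auto
qed

end
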